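(* $\mathcal{A}(\bm{p})$ is a Hermite ring, i.e. every finitely generated stably free $\mathcal{A}(\bm{p})$-module is free. Equivalently, for all $k<K$ in $\mathbb{N}$ and every $f\in\mathcal{A}(\bm{p})^{K\times k}$ admitting $g\in\mathcal{A}(\bm{p})^{k\times K}$ with $g\ast f=I_k$, there exist $f_c\in\mathcal{A}(\bm{p})^{K\times(K-k)}$ and $G\in\mathcal{A}(\bm{p})^{K\times K}$ with $G\ast[f\ \ f_c]=I_K$.
   Context: Fix $\bm{p}:\mathbb{N}_0\to(0,\infty)$ with $\lim_{n\to\infty}\bm{p}(n)^{1/n}=\infty$. For an entire function $f$ write $f(z)=\sum_{n\ge0}\widehat f(n)z^n$. $\mathcal{A}(\bm{p})$ is the set of entire functions $f$ with $\sup_{n\ge 0}\bm{p}(n)|\widehat f(n)|<\infty$, with pointwise addition and scalar multiplication, the weighted Hadamard product $(f\ast g)(z)=\sum_{n\ge0}\bm{p}(n)\widehat f(n)\widehat g(n)z^n$, and norm $\|f\|=\sup_{n\ge0}\bm{p}(n)|\widehat f(n)|$. It is a commutative unital ring with unit $\varepsilon(z)=\sum_{n\ge0}\frac{z^n}{\bm{p}(n)}$; matrix products use $\ast$ and $I_k$ is the $k\times k$ diagonal matrix with diagonal entries $\varepsilon$. *)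

theory Defs
  imports "HOL-Analysis.Analysis"
begin

definition tcoeff :: "(complex \<Rightarrow> complex) \<Rightarrow> nat \<Rightarrow> complex" where
  "tcoeff f n = (deriv ^^ n) f 0 / of_nat (fact n)"

definition Ap :: "(nat \<Rightarrow> real) \<Rightarrow> (complex \<Rightarrow> complex) set" where
  "Ap p = {f. f holomorphic_on UNIV \<and> bdd_above (range (\<lambda>n. p n * norm (tcoeff f n)))}"

definition hmul :: "(nat \<Rightarrow> real) \<Rightarrow> (complex \<Rightarrow> complex) \<Rightarrow> (complex \<Rightarrow> complex) \<Rightarrow> (complex \<Rightarrow> complex)" where
  "hmul p f g = (\<lambda>z. \<Sum>n. of_real (p n) * tcoeff f n * tcoeff g n * z ^ n)"

definition Ap_unit :: "(nat \<Rightarrow> real) \<Rightarrow> (complex \<Rightarrow> complex)" where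
  "Ap_unit p = (\<lambda>z. \<Sum>n. z ^ n / of_real (p n))"

definition Ap_mat :: "(nat \<Rightarrow> real) \<Rightarrow> nat \<Rightarrow> nat \<Rightarrow> (nat \<Rightarrow> nat \<Rightarrow> (complex \<Rightarrow> complex)) \<Rightarrow> bool" where
  "Ap_mat p r c A \<longleftrightarrow> (\<forall>i<r. \<forall>j<c. A i j \<in> Ap p)"

definition Ap_matmul :: "(nat \<Rightarrow> real) \<Rightarrow> nat \<Rightarrow> (nat \<Rightarrow> nat \<Rightarrow> (complex \<Rightarrow> complex))
    \<Rightarrow> (nat \<Rightarrow> nat \<Rightarrow> (complex \<Rightarrow> complex)) \<Rightarrow> nat \<Rightarrow> nat \<Rightarrow> (complex \<Rightarrow> complex)" where
  "Ap_matmul p m A B i j = (\<lambda>z. \<Sum>l<m. hmul p (A i l) (B l j) z)"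

definition Ap_is_id :: "(nat \<Rightarrow> real) \<Rightarrow> nat \<Rightarrow> (nat \<Rightarrow> nat \<Rightarrow> (complex \<Rightarrow> complex)) \<Rightarrow> bool" where
  "Ap_is_id p r A \<longleftrightarrow> (\<forall>i<r. \<forall>j<r. A i j = (if i = j then Ap_unit p else (\<lambda>_. 0)))"

definition hcat :: "nat \<Rightarrow> (nat \<Rightarrow> nat \<Rightarrow> 'a) \<Rightarrow> (nat \<Rightarrow> nat \<Rightarrow> 'a) \<Rightarrow> nat \<Rightarrow> nat \<Rightarrow> 'a" where
  "hcat k A B i j = (if j < k then A i j else B i (j - k))"

end

theory Submission
  imports Defs "HOL-Complex_Analysis.Cauchy_Integral_Formula"
begin

text \<open>The map \<open>f \<mapsto> (p n \<cdot> tcoeff f n)\<^sub>n\<close> identifies \<open>A(p)\<close> with the ring of bounded complex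
  sequences under pointwise operations: the growth of \<open>p\<close> makes \<open>\<Sum> b\<^sub>n / p n \<cdot> z\<^sup>n\<close> entire
  for every bounded \<open>b\<close>, and the weighted Hadamard product becomes the pointwise product.
  A matrix over \<open>A(p)\<close> is thus a bounded sequence of complex matrices, and it suffices to
  complete every \<open>F\<^sub>n\<close> (left inverse \<open>G\<^sub>n\<close>) to an invertible matrix such that the
  completions and their inverses are bounded uniformly in \<open>n\<close>.

  This is done one column at a time. If \<open>U\<close> extends the first \<open>k\<close> columns of \<open>F\<close> and has
  inverse \<open>V\<close>, then \<open>c = V F\<^sub>k\<close> and the row \<open>y = (G U)\<^sub>k\<close> satisfy \<open>y \<cdot> c = 1\<close>, and \<open>y\<close>
  vanishes on the first \<open>k\<close> coordinates. A rank-one update \<open>W\<close> of the identity, with explicit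
  inverse, fixes \<open>e\<^sub>0, \<dots>, e\<^sub>k\<^sub>-\<^sub>1\<close> and sends \<open>e\<^sub>k\<close> to \<open>c\<close>; then \<open>U W\<close> extends
  \<open>k + 1\<close> columns, and all bounds depend only on \<open>K\<close> and the previous ones.\<close>

section \<open>Uniformly bounded completion of left-invertible matrices\<close>

definition mat_mult :: "nat \<Rightarrow> (nat \<Rightarrow> nat \<Rightarrow> 'a::comm_semiring_1) \<Rightarrow> (nat \<Rightarrow> nat \<Rightarrow> 'a)
    \<Rightarrow> nat \<Rightarrow> nat \<Rightarrow> 'a" where
  "mat_mult n A B i j = (\<Sum>l<n. A i l * B l j)"

definition id_mat :: "nat \<Rightarrow> nat \<Rightarrow> 'a::{zero,one}" where
  "id_mat i j = (if i = j then 1 else 0)"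

definition inverse_mats :: "nat \<Rightarrow> (nat \<Rightarrow> nat \<Rightarrow> 'a::comm_semiring_1) \<Rightarrow> (nat \<Rightarrow> nat \<Rightarrow> 'a) \<Rightarrow> bool"
  where "inverse_mats n A B \<longleftrightarrow>
    (\<forall>i<n. \<forall>j<n. mat_mult n A B i j = id_mat i j \<and> mat_mult n B A i j = id_mat i j)"

definition mat_bounded :: "nat \<Rightarrow> (nat \<Rightarrow> nat \<Rightarrow> 'a::real_normed_vector) \<Rightarrow> real \<Rightarrow> bool" where
  "mat_bounded n A C \<longleftrightarrow> (\<forall>i<n. \<forall>j<n. norm (A i j) \<le> C)"

lemma mat_mult_assoc: "mat_mult n (mat_mult n A B) C = mat_mult n A (mat_mult n B C)"
  by (auto simp: fun_eq_iff mat_mult_def sum_distrib_left sum_distrib_right mult.assoc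
      intro: sum.swap)

lemma mat_mult_cong:
  "(\<And>l. l < n \<Longrightarrow> A i l = A' i l) \<Longrightarrow> (\<And>l. l < n \<Longrightarrow> B l j = B' l j)
    \<Longrightarrow> mat_mult n A B i j = mat_mult n A' B' i j"
  unfolding mat_mult_def by (intro sum.cong) auto

lemma sum_id_mat_left:
  fixes x :: "nat \<Rightarrow> 'a::semiring_1"
  assumes "i < n"
  shows "(\<Sum>l<n. id_mat i l * x l) = x i"
proof -
  have "(\<Sum>l<n. id_mat i l * x l) = (\<Sum>l<n. if l = i then x l else 0)"
    by (intro sum.cong) (auto simp: id_mat_def)
  then show ?thesis
    using assms by simp
qed

lemma sum_id_mat_right:
  fixes x :: "nat \<Rightarrow> 'a::comm_semiring_1"
  shows "j < n \<Longrightarrow> (\<Sum>l<n. x l * id_mat l j) = x j"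
  using sum_id_mat_left[of j n x] by (simp add: id_mat_def mult.commute eq_commute[of j])

lemma mat_mult_id_left: "i < n \<Longrightarrow> mat_mult n id_mat B i j = B i j"
  unfolding mat_mult_def by (rule sum_id_mat_left)

lemma mat_mult_id_right: "j < n \<Longrightarrow> mat_mult n A id_mat i j = A i j"
  unfolding mat_mult_def by (rule sum_id_mat_right)

lemma mat_mult_inverse_middle:
  assumes "\<forall>i<n. \<forall>j<n. mat_mult n B C i j = id_mat i j"
  shows "mat_mult n (mat_mult n A B) (mat_mult n C D) i j = mat_mult n A D i j"
proof -
  have "mat_mult n (mat_mult n A B) (mat_mult n C D) i j
      = mat_mult n A (mat_mult n (mat_mult n B C) D) i j"
    by (simp add: mat_mult_assoc)
  also have "\<dots> = mat_mult n A (mat_mult n id_mat D) i j"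
    using assms by (intro mat_mult_cong refl) auto
  also have "\<dots> = mat_mult n A D i j"
    by (intro mat_mult_cong refl) (simp add: mat_mult_id_left)
  finally show ?thesis .
qed

lemma inverse_mats_id: "inverse_mats n id_mat id_mat"
  by (simp add: inverse_mats_def mat_mult_id_left)

lemma inverse_mats_mult:
  "inverse_mats n A B \<Longrightarrow> inverse_mats n C D \<Longrightarrow> inverse_mats n (mat_mult n A C) (mat_mult n D B)"
  unfolding inverse_mats_def by (simp add: mat_mult_inverse_middle)

lemma norm_mat_mult_le:
  fixes A B :: "nat \<Rightarrow> nat \<Rightarrow> 'a::real_normed_field"
  assumes "\<And>l. l < n \<Longrightarrow> norm (A i l) \<le> a" and "\<And>l. l < n \<Longrightarrow> norm (B l j) \<le> b"
  shows "norm (mat_mult n A B i j) \<le> real n * (a * b)"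
proof -
  have "norm (A i l * B l j) \<le> a * b" if "l < n" for l
    unfolding norm_mult using assms[OF that]
    by (intro mult_mono) (auto intro: order_trans[OF norm_ge_zero])
  then have "norm (mat_mult n A B i j) \<le> (\<Sum>l<n. a * b)"
    unfolding mat_mult_def by (intro sum_norm_le) auto
  then show ?thesis by simp
qed

lemma mat_bounded_mult:
  "mat_bounded n A a \<Longrightarrow> mat_bounded n B b \<Longrightarrow> mat_bounded n (mat_mult n A B) (real n * (a * b))"
  for A B :: "nat \<Rightarrow> nat \<Rightarrow> 'a::real_normed_field"
  unfolding mat_bounded_def by (blast intro: norm_mat_mult_le)

lemma mat_bounded_mono: "mat_bounded n A a \<Longrightarrow> a \<le> b \<Longrightarrow> mat_bounded n A b"
  unfolding mat_bounded_def by (meson order_trans)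

lemma rank_one_update_mult:
  fixes u w :: "nat \<Rightarrow> 'a::comm_ring_1"
  assumes "i < n" "j < n"
  shows "mat_mult n (\<lambda>i j. id_mat i j + a * (u i * w j)) (\<lambda>i j. id_mat i j + b * (u i * w j)) i j
    = id_mat i j + (a + b + a * b * (\<Sum>l<n. w l * u l)) * (u i * w j)"
proof -
  have "mat_mult n (\<lambda>i j. id_mat i j + a * (u i * w j)) (\<lambda>i j. id_mat i j + b * (u i * w j)) i j
      = mat_mult n id_mat id_mat i j + mat_mult n id_mat (\<lambda>i j. b * (u i * w j)) i j
        + mat_mult n (\<lambda>i j. a * (u i * w j)) id_mat i j
        + (\<Sum>l<n. a * b * (w l * u l) * (u i * w j))"
    unfolding mat_mult_def sum.distrib[symmetric]
    by (intro sum.cong refl) (simp add: ring_distribs mult_ac)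
  also have "\<dots> = id_mat i j + b * (u i * w j) + a * (u i * w j)
        + a * b * (\<Sum>l<n. w l * u l) * (u i * w j)"
    using assms by (simp add: mat_mult_id_left mat_mult_id_right sum_distrib_left sum_distrib_right)
  finally show ?thesis by (simp add: algebra_simps)
qed

lemma inverse_mats_rank_one_update:
  fixes u w :: "nat \<Rightarrow> 'a::comm_ring_1"
  assumes "a + b + a * b * (\<Sum>l<n. w l * u l) = 0"
  shows "inverse_mats n (\<lambda>i j. id_mat i j + a * (u i * w j)) (\<lambda>i j. id_mat i j + b * (u i * w j))"
proof -
  have "b + a + b * a * (\<Sum>l<n. w l * u l) = 0"
    using assms by (simp add: ac_simps)
  with assms show ?thesis
    unfolding inverse_mats_def by (simp add: rank_one_update_mult)
qed

lemma mat_bounded_rank_one_update: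
  fixes u w :: "nat \<Rightarrow> 'a::real_normed_field"
  assumes "\<And>i. i < n \<Longrightarrow> norm (u i) \<le> U" and "\<And>j. j < n \<Longrightarrow> norm (w j) \<le> V"
  shows "mat_bounded n (\<lambda>i j. id_mat i j + a * (u i * w j)) (1 + norm a * (U * V))"
  unfolding mat_bounded_def
proof (intro allI impI)
  fix i j assume "i < n" "j < n"
  have "norm (u i * w j) \<le> U * V"
    unfolding norm_mult using assms(1)[OF \<open>i < n\<close>] assms(2)[OF \<open>j < n\<close>]
    by (intro mult_mono) (auto intro: order_trans[OF norm_ge_zero])
  then have "norm (a * (u i * w j)) \<le> norm a * (U * V)"
    unfolding norm_mult[of a] by (rule mult_left_mono) simp
  moreover have "norm (id_mat i j :: 'a) \<le> 1" by (simp add: id_mat_def)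
  ultimately show "norm (id_mat i j + a * (u i * w j)) \<le> 1 + norm a * (U * V)"
    by (meson add_mono norm_triangle_ineq order_trans)
qed

lemma one_plus_scaled_bounded_away:
  fixes a :: "'a::real_normed_field"
  shows "1/3 \<le> norm (1 + of_real t * a) \<or> 1/3 \<le> norm (1 + of_real (2 * t) * a)"
proof -
  have "of_real (2 * t) * a = 2 * (of_real t * a)"
    by (simp add: mult.assoc)
  then have "1 = norm (2 * (1 + of_real t * a) - (1 + of_real (2 * t) * a))"
    by (simp add: ring_distribs)
  also have "\<dots> \<le> norm (2 * (1 + of_real t * a)) + norm (1 + of_real (2 * t) * a)"
    by (rule norm_triangle_ineq4)
  also have "\<dots> = 2 * norm (1 + of_real t * a) + norm (1 + of_real (2 * t) * a)"
    by (simp only: norm_mult norm_numeral)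
  finally show ?thesis by linarith
qed

text \<open>With \<open>w = y + t e\<^sub>k\<close>, the matrix \<open>W = I + (c - e\<^sub>k) w\<^sup>T / w\<^sub>k\<close> fixes
  \<open>e\<^sub>0, \<dots>, e\<^sub>k\<^sub>-\<^sub>1\<close> and sends \<open>e\<^sub>k\<close> to \<open>c\<close>. Its inverse
  \<open>I - (c - e\<^sub>k) w\<^sup>T / (w \<cdot> c)\<close> is bounded because \<open>w \<cdot> c = 1 + t c\<^sub>k\<close>
  stays away from 0 for one of the two admissible values of \<open>t\<close>.\<close>

lemma column_completion:
  fixes c y :: "nat \<Rightarrow> 'a::real_normed_field"
  assumes "k < K" and y_vanish: "\<forall>j<k. y j = 0" and y_c: "(\<Sum>j<K. y j * c j) = 1"
    and c_le: "\<forall>i<K. norm (c i) \<le> R" and y_le: "\<forall>j<K. norm (y j) \<le> R"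
  shows "\<exists>W W'. mat_bounded K W (1 + 15 * (R + 1)\<^sup>2) \<and> mat_bounded K W' (1 + 15 * (R + 1)\<^sup>2)
    \<and> inverse_mats K W W' \<and> (\<forall>i<K. \<forall>j<k. W i j = id_mat i j) \<and> (\<forall>i<K. W i k = c i)"
proof -
  have "0 \<le> R"
    using c_le \<open>k < K\<close> by (auto intro: order_trans[OF norm_ge_zero])
  obtain t :: real where t: "2 * (R + 1) \<le> t" "t \<le> 4 * (R + 1)"
    and d_ge: "1/3 \<le> norm (1 + of_real t * c k)"
    using one_plus_scaled_bounded_away[of "2 * (R + 1)" "c k"]
  proof
    assume "1/3 \<le> norm (1 + of_real (2 * (R + 1)) * c k)"
    from that[OF _ _ this] show ?thesis using \<open>0 \<le> R\<close> by simp
  next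
    assume "1/3 \<le> norm (1 + of_real (2 * (2 * (R + 1))) * c k)"
    from that[OF _ _ this] show ?thesis using \<open>0 \<le> R\<close> by simp
  qed
  define w where "w j = y j + of_real t * id_mat k j" for j
  define u where "u i = c i - id_mat i k" for i
  define s where "s = w k"
  define d where "d = 1 + of_real t * c k"
  have "(\<Sum>l<K. w l * c l) = (\<Sum>l<K. y l * c l) + of_real t * (\<Sum>l<K. id_mat k l * c l)"
    by (simp add: w_def distrib_right sum.distrib sum_distrib_left mult.assoc)
  then have w_c: "(\<Sum>l<K. w l * c l) = d"
    using \<open>k < K\<close> y_c by (simp add: d_def sum_id_mat_left)
  have w_u: "(\<Sum>l<K. w l * u l) = d - s"
    using \<open>k < K\<close> w_c by (simp add: u_def s_def right_diff_distrib sum_subtractf sum_id_mat_right)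
  have s_ge: "1 \<le> norm s"
    using norm_diff_ineq[of "of_real t" "y k"] y_le[rule_format, OF \<open>k < K\<close>] t \<open>0 \<le> R\<close>
    by (simp add: s_def w_def id_mat_def add.commute)
  have d_ge': "1/3 \<le> norm d" using d_ge by (simp add: d_def)
  have "s \<noteq> 0" "d \<noteq> 0" using s_ge d_ge' by auto
  then have "1 / s + - 1 / d + 1 / s * (- 1 / d) * (\<Sum>l<K. w l * u l) = 0"
    unfolding w_u by (simp add: field_simps)
  define W where "W = (\<lambda>i j. id_mat i j + 1 / s * (u i * w j))"
  define W' where "W' = (\<lambda>i j. id_mat i j + - 1 / d * (u i * w j))"
  have "inverse_mats K W W'"
    unfolding W_def W'_def by (rule inverse_mats_rank_one_update) fact
  have norm_id: "norm (id_mat i j :: 'a) \<le> 1" for i j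
    by (simp add: id_mat_def)
  have u_le: "norm (u i) \<le> R + 1" if "i < K" for i
    using norm_triangle_ineq4[of "c i" "id_mat i k"] c_le[rule_format, OF that] norm_id[of i k]
    unfolding u_def by linarith
  have "norm (of_real t * id_mat k j :: 'a) \<le> t" for j
    using t \<open>0 \<le> R\<close> by (simp add: id_mat_def)
  then have w_le: "norm (w j) \<le> 5 * (R + 1)" if "j < K" for j
    using norm_triangle_ineq[of "y j" "of_real t * id_mat k j"] y_le[rule_format, OF that] t
    unfolding w_def by (smt (verit))
  have bound: "1 + norm a * ((R + 1) * (5 * (R + 1))) \<le> 1 + 15 * (R + 1)\<^sup>2"
    if "norm a \<le> 3" for a :: 'a
    using mult_right_mono[OF that, of "(R + 1) * (5 * (R + 1))"] \<open>0 \<le> R\<close>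
    by (simp add: power2_eq_square)
  have "norm (1 / s) \<le> 3" "norm (- 1 / d) \<le> 3"
    using s_ge d_ge' by (simp_all add: norm_divide divide_le_eq)
  note scalar_le = this[THEN bound]
  have "mat_bounded K W (1 + 15 * (R + 1)\<^sup>2)"
    using mat_bounded_rank_one_update[OF u_le w_le] scalar_le(1) unfolding W_def
    by (rule mat_bounded_mono)
  moreover have "mat_bounded K W' (1 + 15 * (R + 1)\<^sup>2)"
    using mat_bounded_rank_one_update[OF u_le w_le] scalar_le(2) unfolding W'_def
    by (rule mat_bounded_mono)
  moreover have "\<forall>i<K. \<forall>j<k. W i j = id_mat i j"
    using y_vanish by (simp add: W_def w_def id_mat_def)
  moreover have "\<forall>i<K. W i k = c i"
    using \<open>s \<noteq> 0\<close> by (simp add: W_def u_def flip: s_def)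
  ultimately show ?thesis
    using \<open>inverse_mats K W W'\<close> by blast
qed

lemma next_column_unimodular:
  fixes G F U V :: "nat \<Rightarrow> nat \<Rightarrow> 'a::comm_ring_1"
  assumes "k < K" and UV: "inverse_mats K U V" and U_F: "\<forall>i<K. \<forall>j<k. U i j = F i j"
    and G_F: "\<forall>i<Suc k. \<forall>j<Suc k. mat_mult K G F i j = id_mat i j"
  shows "\<forall>j<k. mat_mult K G U k j = 0"
    and "(\<Sum>j<K. mat_mult K G U k j * mat_mult K V F j k) = 1"
proof -
  show "\<forall>j<k. mat_mult K G U k j = 0"
  proof (intro allI impI)
    fix j assume "j < k"
    then have "mat_mult K G U k j = mat_mult K G F k j"
      using U_F \<open>k < K\<close> by (intro mat_mult_cong) auto
    also have "\<dots> = 0"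
      using G_F \<open>j < k\<close> by (simp add: id_mat_def)
    finally show "mat_mult K G U k j = 0" .
  qed
  have "(\<Sum>j<K. mat_mult K G U k j * mat_mult K V F j k)
      = mat_mult K (mat_mult K G U) (mat_mult K V F) k k"
    by (simp only: mat_mult_def[of K "mat_mult K G U"])
  also have "\<dots> = mat_mult K G F k k"
    using UV by (simp add: inverse_mats_def mat_mult_inverse_middle)
  also have "\<dots> = 1"
    using G_F by (simp add: id_mat_def)
  finally show "(\<Sum>j<K. mat_mult K G U k j * mat_mult K V F j k) = 1" .
qed

lemma extend_completion_by_column:
  fixes U V F W W' :: "nat \<Rightarrow> nat \<Rightarrow> 'a::comm_ring_1"
  assumes "k < K" and UV: "inverse_mats K U V" and WW': "inverse_mats K W W'"
    and U_F: "\<forall>i<K. \<forall>j<k. U i j = F i j"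
    and W_id: "\<forall>i<K. \<forall>j<k. W i j = id_mat i j" and W_col: "\<forall>i<K. W i k = mat_mult K V F i k"
  shows "inverse_mats K (mat_mult K U W) (mat_mult K W' V)"
    and "\<forall>i<K. \<forall>j<Suc k. mat_mult K U W i j = F i j"
proof -
  show "inverse_mats K (mat_mult K U W) (mat_mult K W' V)"
    using UV WW' by (rule inverse_mats_mult)
  have "mat_mult K U W i j = F i j" if "i < K" "j < k" for i j
  proof -
    have "mat_mult K U W i j = mat_mult K U id_mat i j"
      using W_id that \<open>k < K\<close> by (intro mat_mult_cong) auto
    then show ?thesis
      using U_F that \<open>k < K\<close> by (simp add: mat_mult_id_right)
  qed
  moreover have "mat_mult K U W i k = F i k" if "i < K" for i
  proof -
    have "mat_mult K U W i k = mat_mult K U (mat_mult K V F) i k"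
      using W_col by (intro mat_mult_cong) auto
    also have "\<dots> = mat_mult K (mat_mult K U V) F i k"
      by (simp only: mat_mult_assoc)
    also have "\<dots> = mat_mult K id_mat F i k"
      using UV that by (intro mat_mult_cong) (auto simp: inverse_mats_def)
    finally show ?thesis
      using that by (simp add: mat_mult_id_left)
  qed
  ultimately show "\<forall>i<K. \<forall>j<Suc k. mat_mult K U W i j = F i j"
    using less_Suc_eq by auto
qed

lemma bounded_completion_step:
  fixes F G U V :: "nat \<Rightarrow> nat \<Rightarrow> 'a::real_normed_field"
  assumes "k < K"
    and F_le: "\<forall>i<K. \<forall>j<Suc k. norm (F i j) \<le> M"
    and G_le: "\<forall>i<Suc k. \<forall>j<K. norm (G i j) \<le> M"
    and G_F: "\<forall>i<Suc k. \<forall>j<Suc k. mat_mult K G F i j = id_mat i j"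
    and U_le: "mat_bounded K U C" and V_le: "mat_bounded K V C" and UV: "inverse_mats K U V"
    and U_F: "\<forall>i<K. \<forall>j<k. U i j = F i j"
  defines "B \<equiv> 1 + 15 * (real K * (C * M) + 1)\<^sup>2"
  shows "\<exists>U' V'. mat_bounded K U' (real K * (C * B)) \<and> mat_bounded K V' (real K * (C * B))
    \<and> inverse_mats K U' V' \<and> (\<forall>i<K. \<forall>j<Suc k. U' i j = F i j)"
proof -
  have "\<forall>i<K. norm (mat_mult K V F i k) \<le> real K * (C * M)"
    using V_le F_le \<open>k < K\<close> unfolding mat_bounded_def by (auto intro!: norm_mat_mult_le)
  moreover have "\<forall>j<K. norm (mat_mult K G U k j) \<le> real K * (C * M)"
    using U_le G_le \<open>k < K\<close> norm_mat_mult_le[of K G k M U _ C]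
    unfolding mat_bounded_def by (auto simp: mult.commute)
  ultimately obtain W W' where "mat_bounded K W B" "mat_bounded K W' B"
    and WW': "inverse_mats K W W'"
    and "\<forall>i<K. \<forall>j<k. W i j = id_mat i j" "\<forall>i<K. W i k = mat_mult K V F i k"
    using column_completion[OF \<open>k < K\<close> next_column_unimodular[OF \<open>k < K\<close> UV U_F G_F]]
    unfolding B_def by blast
  with extend_completion_by_column[OF \<open>k < K\<close> UV WW' U_F] U_le V_le show ?thesis
    by (metis mat_bounded_mult mult.commute)
qed

lemma bounded_completion:
  fixes F G :: "'n \<Rightarrow> nat \<Rightarrow> nat \<Rightarrow> 'a::real_normed_field"
  assumes "k \<le> K"
    and "\<forall>n. \<forall>i<K. \<forall>j<k. norm (F n i j) \<le> M" and "\<forall>n. \<forall>i<k. \<forall>j<K. norm (G n i j) \<le> M"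
    and "\<forall>n. \<forall>i<k. \<forall>j<k. mat_mult K (G n) (F n) i j = id_mat i j"
  shows "\<exists>C. \<forall>n. \<exists>U V. mat_bounded K U C \<and> mat_bounded K V C \<and> inverse_mats K U V
    \<and> (\<forall>i<K. \<forall>j<k. U i j = F n i j)"
  using assms
proof (induction k)
  case 0
  have "mat_bounded K (id_mat :: nat \<Rightarrow> nat \<Rightarrow> 'a) 1"
    by (simp add: mat_bounded_def id_mat_def)
  then show ?case
    using inverse_mats_id by blast
next
  case (Suc k)
  have "\<exists>C. \<forall>n. \<exists>U V. mat_bounded K U C \<and> mat_bounded K V C \<and> inverse_mats K U V
      \<and> (\<forall>i<K. \<forall>j<k. U i j = F n i j)"
    using Suc.prems by (intro Suc.IH) auto
  then obtain C where IH: "\<forall>n. \<exists>U V. mat_bounded K U C \<and> mat_bounded K V C \<and> inverse_mats K U V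
      \<and> (\<forall>i<K. \<forall>j<k. U i j = F n i j)" ..
  let ?C = "real K * (C * (1 + 15 * (real K * (C * M) + 1)\<^sup>2))"
  show ?case
  proof (intro exI[of _ ?C] allI)
    fix n
    from IH obtain U V where "mat_bounded K U C" "mat_bounded K V C" "inverse_mats K U V"
      "\<forall>i<K. \<forall>j<k. U i j = F n i j"
      by blast
    with Suc.prems show "\<exists>U V. mat_bounded K U ?C \<and> mat_bounded K V ?C \<and> inverse_mats K U V
        \<and> (\<forall>i<K. \<forall>j<Suc k. U i j = F n i j)"
      by (intro bounded_completion_step[where G = "G n"]) auto
  qed
qed

section \<open>\<open>A(p)\<close> as the ring of bounded sequences\<close>

lemma Bseq_sum:
  fixes f :: "'i \<Rightarrow> nat \<Rightarrow> 'a::real_normed_vector"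
  shows "(\<And>l. l \<in> S \<Longrightarrow> Bseq (f l)) \<Longrightarrow> Bseq (\<lambda>n. \<Sum>l\<in>S. f l n)"
proof (induction S rule: infinite_finite_induct)
  case (insert l S)
  then obtain K L where "\<And>n. norm (f l n) \<le> K" "\<And>n. norm (\<Sum>l\<in>S. f l n) \<le> L"
    by (metis BseqE insertCI)
  then have "norm (\<Sum>l\<in>insert l S. f l n) \<le> K + L" for n
    using insert.hyps by (simp add: norm_triangle_le add_mono)
  then show ?case by (rule BseqI')
qed simp_all

lemma Bseq_finite_uniform_bound:
  fixes f :: "'i \<Rightarrow> nat \<Rightarrow> 'a::real_normed_vector"
  assumes "finite S" "\<And>x. x \<in> S \<Longrightarrow> Bseq (f x)"
  shows "\<exists>M. \<forall>x\<in>S. \<forall>n. norm (f x n) \<le> M"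
proof -
  have "\<forall>x\<in>S. \<exists>M. \<forall>n. norm (f x n) \<le> M"
    using assms(2) by (meson BseqE)
  from bchoice[OF this] obtain M where "\<forall>x\<in>S. \<forall>n. norm (f x n) \<le> M x"
    by blast
  then have "\<forall>x\<in>S. \<forall>n. norm (f x n) \<le> Max (M ` S)"
    using assms(1) by (meson Max_ge finite_imageI image_eqI order_trans)
  then show ?thesis ..
qed

lemma Ap_mat_hcat: "Ap_mat p r k A \<Longrightarrow> Ap_mat p r (c - k) B \<Longrightarrow> Ap_mat p r c (hcat k A B)"
  by (simp add: Ap_mat_def hcat_def)

definition Ap_of_seq :: "(nat \<Rightarrow> real) \<Rightarrow> (nat \<Rightarrow> complex) \<Rightarrow> complex \<Rightarrow> complex" where
  "Ap_of_seq p b = (\<lambda>z. \<Sum>n. b n / of_real (p n) * z ^ n)"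

definition Ap_coeffs :: "(nat \<Rightarrow> real) \<Rightarrow> (complex \<Rightarrow> complex) \<Rightarrow> nat \<Rightarrow> complex" where
  "Ap_coeffs p f n = of_real (p n) * tcoeff f n"

locale rapid_weight =
  fixes p :: "nat \<Rightarrow> real"
  assumes weight_pos: "\<And>n. p n > 0"
    and weight_root_growth: "filterlim (\<lambda>n. root n (p n)) at_top sequentially"
begin

lemma summable_Ap_of_seq:
  fixes b :: "nat \<Rightarrow> complex"
  assumes "Bseq b"
  shows "summable (\<lambda>n. b n / of_real (p n) * z ^ n)"
proof -
  obtain C where C: "\<And>n. norm (b n) \<le> C"
    using assms by (meson BseqE)
  have "eventually (\<lambda>n. 2 * norm z + 1 \<le> root n (p n)) sequentially"
    using weight_root_growth by (simp add: filterlim_at_top)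
  with eventually_gt_at_top[of 0]
  have "eventually (\<lambda>n. norm (b n / of_real (p n) * z ^ n) \<le> C * (1/2) ^ n) sequentially"
  proof eventually_elim
    case (elim n)
    have "(2 * norm z) ^ n \<le> root n (p n) ^ n"
      using elim by (intro power_mono) auto
    also have "\<dots> = p n"
      using elim weight_pos by (simp add: real_root_pow_pos)
    finally have "norm z ^ n / p n \<le> (1/2) ^ n"
      using weight_pos[of n] by (simp add: field_simps power_mult_distrib)
    moreover have "0 \<le> C"
      using C[of 0] by (auto intro: order_trans[OF norm_ge_zero])
    moreover have "norm (b n / of_real (p n) * z ^ n) = norm (b n) * (norm z ^ n / p n)"
      using weight_pos[of n] by (simp add: norm_mult norm_divide norm_power)
    ultimately show ?case
      using mult_mono[OF C[of n], of "norm z ^ n / p n" "(1/2) ^ n"] weight_pos[of n]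
      by (simp add: zero_le_divide_iff)
  qed
  then show ?thesis
    by (rule summable_comparison_test_ev) (simp add: summable_geometric)
qed

lemma Ap_of_seq_eq_eval_fps: "Ap_of_seq p b = eval_fps (Abs_fps (\<lambda>n. b n / of_real (p n)))"
  by (simp add: Ap_of_seq_def eval_fps_def fun_eq_iff)

lemma fps_conv_radius_Ap_of_seq:
  fixes b :: "nat \<Rightarrow> complex"
  shows "Bseq b \<Longrightarrow> fps_conv_radius (Abs_fps (\<lambda>n. b n / of_real (p n))) = \<infinity>"
  unfolding fps_conv_radius_def using summable_Ap_of_seq by (intro conv_radius_inftyI'') simp

lemma tcoeff_Ap_of_seq:
  assumes "Bseq b"
  shows "tcoeff (Ap_of_seq p b) n = b n / of_real (p n)"
proof -
  have "Ap_of_seq p b has_fps_expansion Abs_fps (\<lambda>n. b n / of_real (p n))"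
    unfolding Ap_of_seq_eq_eval_fps
    by (rule eval_fps_has_fps_expansion) (simp add: fps_conv_radius_Ap_of_seq[OF assms])
  from fps_nth_fps_expansion[OF this] show ?thesis
    by (simp add: tcoeff_def)
qed

lemma Ap_coeffs_Ap_of_seq: "Bseq b \<Longrightarrow> Ap_coeffs p (Ap_of_seq p b) = b"
  using weight_pos by (simp add: fun_eq_iff Ap_coeffs_def tcoeff_Ap_of_seq less_le)

lemma Ap_of_seq_Ap_coeffs:
  assumes "f holomorphic_on UNIV"
  shows "Ap_of_seq p (Ap_coeffs p f) = f"
proof
  fix z
  have "(\<lambda>n. (deriv ^^ n) f 0 / fact n * (z - 0) ^ n) sums f z"
    using assms by (intro holomorphic_power_series[where r = "norm z + 1"]) auto
  then show "Ap_of_seq p (Ap_coeffs p f) z = f z"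
    using weight_pos by (simp add: Ap_of_seq_def Ap_coeffs_def tcoeff_def sums_iff less_le)
qed

lemma norm_Ap_coeffs: "norm (Ap_coeffs p f n) = p n * norm (tcoeff f n)"
  using weight_pos[of n] by (simp add: Ap_coeffs_def norm_mult)

lemma Ap_iff_Bseq_Ap_coeffs: "f \<in> Ap p \<longleftrightarrow> f holomorphic_on UNIV \<and> Bseq (Ap_coeffs p f)"
proof -
  have "bdd_above (range (\<lambda>n. p n * norm (tcoeff f n))) \<longleftrightarrow> Bseq (Ap_coeffs p f)"
  proof
    assume "bdd_above (range (\<lambda>n. p n * norm (tcoeff f n)))"
    then obtain M where "\<And>n. norm (Ap_coeffs p f n) \<le> M"
      by (auto simp: bdd_above_def norm_Ap_coeffs)
    then show "Bseq (Ap_coeffs p f)" by (rule BseqI')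
  next
    assume "Bseq (Ap_coeffs p f)"
    from Bseq_bdd_above'[OF this] show "bdd_above (range (\<lambda>n. p n * norm (tcoeff f n)))"
      by (simp add: norm_Ap_coeffs)
  qed
  then show ?thesis
    by (simp add: Ap_def)
qed

lemma Ap_of_seq_in_Ap:
  assumes "Bseq b"
  shows "Ap_of_seq p b \<in> Ap p"
proof -
  have "Ap_of_seq p b holomorphic_on UNIV"
    unfolding Ap_of_seq_eq_eval_fps
    by (rule holomorphic_on_eval_fps) (simp add: fps_conv_radius_Ap_of_seq[OF assms])
  then show ?thesis
    by (simp add: Ap_iff_Bseq_Ap_coeffs Ap_coeffs_Ap_of_seq assms)
qed

lemma hmul_Ap_of_seq:
  assumes "Bseq a" "Bseq b"
  shows "hmul p (Ap_of_seq p a) (Ap_of_seq p b) = Ap_of_seq p (\<lambda>n. a n * b n)"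
proof -
  have "of_real (p n) * (a n / of_real (p n)) * (b n / of_real (p n)) * z ^ n
      = a n * b n / of_real (p n) * z ^ n" for n and z :: complex
    using weight_pos[of n] by (simp add: field_simps)
  then show ?thesis
    unfolding hmul_def tcoeff_Ap_of_seq[OF assms(1)] tcoeff_Ap_of_seq[OF assms(2)]
    by (simp only: Ap_of_seq_def)
qed

lemma sum_Ap_of_seq:
  assumes "finite S" "\<And>l. l \<in> S \<Longrightarrow> Bseq (b l)"
  shows "(\<lambda>z. \<Sum>l\<in>S. Ap_of_seq p (b l) z) = Ap_of_seq p (\<lambda>n. \<Sum>l\<in>S. b l n)"
proof
  fix z
  have "(\<Sum>l\<in>S. Ap_of_seq p (b l) z) = (\<Sum>n. \<Sum>l\<in>S. b l n / of_real (p n) * z ^ n)"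
    unfolding Ap_of_seq_def using assms by (intro suminf_sum[symmetric] summable_Ap_of_seq)
  then show "(\<Sum>l\<in>S. Ap_of_seq p (b l) z) = Ap_of_seq p (\<lambda>n. \<Sum>l\<in>S. b l n) z"
    by (simp add: Ap_of_seq_def sum_divide_distrib sum_distrib_right)
qed

lemma Bseq_Ap_coeffs: "f \<in> Ap p \<Longrightarrow> Bseq (Ap_coeffs p f)"
  by (simp add: Ap_iff_Bseq_Ap_coeffs)

lemma Ap_of_seq_inject: "Bseq a \<Longrightarrow> Bseq b \<Longrightarrow> Ap_of_seq p a = Ap_of_seq p b \<longleftrightarrow> a = b"
  by (metis Ap_coeffs_Ap_of_seq)

lemma Ap_of_seq_id_mat: "Ap_of_seq p (\<lambda>_. id_mat i j) = (if i = j then Ap_unit p else (\<lambda>_. 0))"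
  by (simp add: Ap_of_seq_def Ap_unit_def id_mat_def)

lemma Ap_mat_Ap_of_seq:
  assumes "\<And>n i j. i < r \<Longrightarrow> j < c \<Longrightarrow> norm (A n i j) \<le> C"
  shows "Ap_mat p r c (\<lambda>i j. Ap_of_seq p (\<lambda>n. A n i j))"
  unfolding Ap_mat_def using assms by (blast intro: Ap_of_seq_in_Ap BseqI')

lemma Ap_mat_coeffs_bounded:
  assumes "Ap_mat p r c X"
  shows "\<exists>M. \<forall>n. \<forall>i<r. \<forall>j<c. norm (Ap_coeffs p (X i j) n) \<le> M"
proof -
  have "\<exists>M. \<forall>ij\<in>{..<r} \<times> {..<c}. \<forall>n. norm (Ap_coeffs p (case_prod X ij) n) \<le> M"
    using assms by (intro Bseq_finite_uniform_bound) (auto simp: Ap_mat_def Bseq_Ap_coeffs)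
  then show ?thesis by auto
qed

lemma Ap_matmul_Ap_of_seq:
  assumes "\<And>l. l < m \<Longrightarrow> Bseq (\<lambda>n. A n i l)" "\<And>l. l < m \<Longrightarrow> Bseq (\<lambda>n. B n l j)"
  shows "Ap_matmul p m (\<lambda>i l. Ap_of_seq p (\<lambda>n. A n i l)) (\<lambda>l j. Ap_of_seq p (\<lambda>n. B n l j)) i j
    = Ap_of_seq p (\<lambda>n. mat_mult m (A n) (B n) i j)"
proof -
  have "Ap_matmul p m (\<lambda>i l. Ap_of_seq p (\<lambda>n. A n i l)) (\<lambda>l j. Ap_of_seq p (\<lambda>n. B n l j)) i j
      = (\<lambda>z. \<Sum>l<m. Ap_of_seq p (\<lambda>n. A n i l * B n l j) z)"
    unfolding Ap_matmul_def using assms by (simp add: hmul_Ap_of_seq)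
  also have "\<dots> = Ap_of_seq p (\<lambda>n. \<Sum>l<m. A n i l * B n l j)"
    using assms by (intro sum_Ap_of_seq) (auto intro: Bseq_mult)
  finally show ?thesis
    by (simp add: mat_mult_def)
qed

lemma Ap_matmul_eq_Ap_of_seq:
  assumes "\<And>l. l < m \<Longrightarrow> X i l \<in> Ap p" "\<And>l. l < m \<Longrightarrow> Y l j \<in> Ap p"
  shows "Ap_matmul p m X Y i j = Ap_of_seq p (\<lambda>n.
    mat_mult m (\<lambda>i l. Ap_coeffs p (X i l) n) (\<lambda>l j. Ap_coeffs p (Y l j) n) i j)"
proof -
  have "Ap_matmul p m X Y i j = Ap_matmul p m (\<lambda>i l. Ap_of_seq p (\<lambda>n. Ap_coeffs p (X i l) n))
      (\<lambda>l j. Ap_of_seq p (\<lambda>n. Ap_coeffs p (Y l j) n)) i j"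
    unfolding Ap_matmul_def using assms by (simp add: Ap_of_seq_Ap_coeffs Ap_iff_Bseq_Ap_coeffs)
  also have "\<dots> = Ap_of_seq p (\<lambda>n.
      mat_mult m (\<lambda>i l. Ap_coeffs p (X i l) n) (\<lambda>l j. Ap_coeffs p (Y l j) n) i j)"
    using assms by (intro Ap_matmul_Ap_of_seq) (simp_all add: Bseq_Ap_coeffs)
  finally show ?thesis .
qed

lemma Ap_is_id_Ap_matmul_iff:
  assumes "Ap_mat p r m X" "Ap_mat p m r Y"
  shows "Ap_is_id p r (Ap_matmul p m X Y) \<longleftrightarrow> (\<forall>n. \<forall>i<r. \<forall>j<r.
    mat_mult m (\<lambda>i l. Ap_coeffs p (X i l) n) (\<lambda>l j. Ap_coeffs p (Y l j) n) i j = id_mat i j)"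
proof -
  have "Ap_matmul p m X Y i j = (if i = j then Ap_unit p else (\<lambda>_. 0)) \<longleftrightarrow> (\<forall>n.
      mat_mult m (\<lambda>i l. Ap_coeffs p (X i l) n) (\<lambda>l j. Ap_coeffs p (Y l j) n) i j = id_mat i j)"
    if "i < r" "j < r" for i j
  proof -
    let ?c = "\<lambda>n. mat_mult m (\<lambda>i l. Ap_coeffs p (X i l) n) (\<lambda>l j. Ap_coeffs p (Y l j) n) i j"
    have "Bseq ?c"
      unfolding mat_mult_def using assms that
      by (intro Bseq_sum Bseq_mult) (auto simp: Ap_mat_def Bseq_Ap_coeffs)
    then have "Ap_of_seq p ?c = Ap_of_seq p (\<lambda>_. id_mat i j) \<longleftrightarrow> ?c = (\<lambda>_. id_mat i j)"
      by (intro Ap_of_seq_inject) simp_all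
    then show ?thesis
      using assms that
      by (simp add: Ap_matmul_eq_Ap_of_seq Ap_mat_def fun_eq_iff flip: Ap_of_seq_id_mat)
  qed
  then show ?thesis
    unfolding Ap_is_id_def by blast
qed

lemma Ap_hermite_of_bounded_completions:
  assumes f: "Ap_mat p K k f"
    and completions: "\<forall>n. \<exists>U V. mat_bounded K U C \<and> mat_bounded K V C \<and> inverse_mats K U V
      \<and> (\<forall>i<K. \<forall>j<k. U i j = Ap_coeffs p (f i j) n)"
  shows "\<exists>fc G. Ap_mat p K (K - k) fc \<and> Ap_mat p K K G
    \<and> Ap_is_id p K (Ap_matmul p K G (hcat k f fc))"
proof -
  from completions obtain U V where U_le: "\<And>n. mat_bounded K (U n) C"
    and V_le: "\<And>n. mat_bounded K (V n) C" and UV: "\<And>n. inverse_mats K (U n) (V n)"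
    and U_f: "\<And>n i j. i < K \<Longrightarrow> j < k \<Longrightarrow> U n i j = Ap_coeffs p (f i j) n"
    by metis
  define fc where "fc = (\<lambda>i j. Ap_of_seq p (\<lambda>n. U n i (k + j)))"
  define G where "G = (\<lambda>i j. Ap_of_seq p (\<lambda>n. V n i j))"
  have fc: "Ap_mat p K (K - k) fc"
    unfolding fc_def using U_le by (intro Ap_mat_Ap_of_seq[where C = C]) (simp add: mat_bounded_def)
  moreover have G: "Ap_mat p K K G"
    unfolding G_def using V_le by (intro Ap_mat_Ap_of_seq[where C = C]) (simp add: mat_bounded_def)
  have U_Bseq: "Bseq (\<lambda>n. U n i j)" and V_Bseq: "Bseq (\<lambda>n. V n i j)" if "i < K" "j < K" for i j
    using U_le V_le that by (auto simp: mat_bounded_def intro!: BseqI'[where K = C])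
  have "Ap_coeffs p (hcat k f fc l j) n = U n l j" if "l < K" "j < K" for l j n
    using that U_f U_Bseq[of l j] by (simp add: hcat_def fc_def Ap_coeffs_Ap_of_seq)
  moreover have "Ap_coeffs p (G i l) n = V n i l" if "i < K" "l < K" for i l n
    using V_Bseq[OF that] by (simp add: G_def Ap_coeffs_Ap_of_seq)
  ultimately have "mat_mult K (\<lambda>i l. Ap_coeffs p (G i l) n)
      (\<lambda>l j. Ap_coeffs p (hcat k f fc l j) n) i j = mat_mult K (V n) (U n) i j"
    if "i < K" "j < K" for i j n
    using that by (intro mat_mult_cong) auto
  then have "Ap_is_id p K (Ap_matmul p K G (hcat k f fc))"
    using Ap_is_id_Ap_matmul_iff[OF G Ap_mat_hcat[OF f fc]] UV by (simp add: inverse_mats_def)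
  with fc G show ?thesis by blast
qed

end

theorem mainTheorem3:
  fixes p :: "nat \<Rightarrow> real"
  assumes ppos: "\<And>n. p n > 0"
    and pgrowth: "filterlim (\<lambda>n. root n (p n)) at_top sequentially"
  shows "\<forall>k K f g. 0 < k \<and> k < K \<and> Ap_mat p K k f \<and> Ap_mat p k K g
            \<and> Ap_is_id p k (Ap_matmul p K g f) \<longrightarrow>
          (\<exists>fc G. Ap_mat p K (K - k) fc \<and> Ap_mat p K K G
            \<and> Ap_is_id p K (Ap_matmul p K G (hcat k f fc)))"
proof -
  interpret rapid_weight p
    using ppos pgrowth by unfold_locales
  show ?thesis
  proof (intro allI impI, elim conjE)
    fix k K f g
    assume "0 < k" "k < K" and f: "Ap_mat p K k f" and g: "Ap_mat p k K g"
      and gf: "Ap_is_id p k (Ap_matmul p K g f)"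
    define F where "F = (\<lambda>n i j. Ap_coeffs p (f i j) n)"
    define G where "G = (\<lambda>n i j. Ap_coeffs p (g i j) n)"
    obtain M1 M2 where M1: "\<forall>n. \<forall>i<K. \<forall>j<k. norm (F n i j) \<le> M1"
      and M2: "\<forall>n. \<forall>i<k. \<forall>j<K. norm (G n i j) \<le> M2"
      using Ap_mat_coeffs_bounded[OF f] Ap_mat_coeffs_bounded[OF g] unfolding F_def G_def by blast
    then have "\<forall>n. \<forall>i<K. \<forall>j<k. norm (F n i j) \<le> max M1 M2"
      and "\<forall>n. \<forall>i<k. \<forall>j<K. norm (G n i j) \<le> max M1 M2"
      by (auto simp: le_max_iff_disj)
    moreover have "\<forall>n. \<forall>i<k. \<forall>j<k. mat_mult K (G n) (F n) i j = id_mat i j"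
      using gf unfolding Ap_is_id_Ap_matmul_iff[OF g f] F_def G_def .
    ultimately have "\<exists>C. \<forall>n. \<exists>U V. mat_bounded K U C \<and> mat_bounded K V C
        \<and> inverse_mats K U V \<and> (\<forall>i<K. \<forall>j<k. U i j = F n i j)"
      by (rule bounded_completion[OF less_imp_le[OF \<open>k < K\<close>]])
    then show "\<exists>fc G. Ap_mat p K (K - k) fc \<and> Ap_mat p K K G
        \<and> Ap_is_id p K (Ap_matmul p K G (hcat k f fc))"
      unfolding F_def by (blast intro: Ap_hermite_of_bounded_completions[OF f])
  qed
qed

end
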